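(* For every directed co-graph $G=(V,E)$ which is given by a binary di-co-tree, the directed path-width $\mathrm{dpw}(G)$ and the directed tree-width $\mathrm{dtw}(G)$ can be computed in time $O(|V|)$.
   Context: Digraphs are finite, without loops or multiple arcs. Operations on vertex-disjoint digraphs $G_1,\ldots,G_k$: disjoint union $\oplus$ (union of vertex and arc sets); series composition $\otimes$ (disjoint union plus all arcs in both directions between vertices of different $G_i$); order composition $\oslash$ (disjoint union plus all arcs from vertices of $G_i$ to vertices of $G_j$ for $i<j$). Directed co-graphs: single-vertex digraphs, and closure under these three operations. A di-co-tree for a directed co-graph $G$ is a rooted tree whose leaves correspond to the vertices of $G$ and whose inner nodes are labeled by $\oplus,\otimes,\oslash$ (with ordered children), such that evaluating the operations on the digraphs defined by the child subtrees yields $G$ at the root; it is binary if every inner node has exactly two children. Directed path-width: a directed path-decomposition of $G=(V,E)$ is a sequence $(X_1,\ldots,X_r)$ of subsets of $V$ with $\bigcup X_i=V$, for each arc $(u,v)$ some $i\le j$ with $u\in X_i,v\in X_j$, and for each vertex the bags containing it having consecutive indices; width $\max|X_i|-1$; $\mathrm{dpw}(G)$ is the minimum width. Directed tree-width: for $Z\subseteq V$, $S\subseteq V$ is $Z$-normal if no directed walk in $G-Z$ with first and last vertex in $S$ uses a vertex of $G-(Z\cup S)$. A directed tree-decomposition is $(T,\mathcal{X},\mathcal{W})$ with $T=(V_T,E_T)$ an out-tree (rooted, arcs directed away from root; $u\le v$ means a directed path of $\ge0$ arcs from $u$ to $v$), $\mathcal{X}=\{X_e:e\in E_T\}$, $\mathcal{W}=\{W_r:r\in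 V_T\}$ subsets of $V$, such that $\mathcal{W}$ partitions $V$ into nonempty sets and for each $(u,v)\in E_T$ the set $\bigcup\{W_r: v\le r\}$ is $X_{(u,v)}$-normal; width $\max_r|W_r\cup\bigcup_{e\sim r}X_e|-1$ ($e\sim r$: $r$ is an end of $e$); $\mathrm{dtw}(G)$ is the minimum width. *)

theory Defs
  imports Main
begin

datatype 'v dicotree =
    Leaf 'v
  | DUnion "'v dicotree" "'v dicotree"
  | DSeries "'v dicotree" "'v dicotree"
  | DOrder "'v dicotree" "'v dicotree"

fun leaves :: "'v dicotree \<Rightarrow> 'v list" where
  "leaves (Leaf v) = [v]"
| "leaves (DUnion a b) = leaves a @ leaves b"
| "leaves (DSeries a b) = leaves a @ leaves b"
| "leaves (DOrder a b) = leaves a @ leaves b"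

definition verts :: "'v dicotree \<Rightarrow> 'v set" where
  "verts t = set (leaves t)"

fun arcs :: "'v dicotree \<Rightarrow> ('v \<times> 'v) set" where
  "arcs (Leaf v) = {}"
| "arcs (DUnion a b) = arcs a \<union> arcs b"
| "arcs (DSeries a b) = arcs a \<union> arcs b \<union> (set (leaves a) \<times> set (leaves b))
                         \<union> (set (leaves b) \<times> set (leaves a))"
| "arcs (DOrder a b) = arcs a \<union> arcs b \<union> (set (leaves a) \<times> set (leaves b))"

definition wf_dicotree :: "'v dicotree \<Rightarrow> bool" where
  "wf_dicotree t = distinct (leaves t)"

definition is_dir_path_decomp :: "'v set \<Rightarrow> ('v \<times> 'v) set \<Rightarrow> 'v set list \<Rightarrow> bool" where
  "is_dir_path_decomp V E Xs \<longleftrightarrow>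
     (\<forall>X\<in>set Xs. X \<subseteq> V) \<and> \<Union>(set Xs) = V \<and>
     (\<forall>(u,v)\<in>E. \<exists>i j. i \<le> j \<and> j < length Xs \<and> u \<in> Xs ! i \<and> v \<in> Xs ! j) \<and>
     (\<forall>v i j k. i \<le> j \<and> j \<le> k \<and> k < length Xs \<and> v \<in> Xs ! i \<and> v \<in> Xs ! k \<longrightarrow> v \<in> Xs ! j)"

definition path_decomp_width :: "'v set list \<Rightarrow> nat" where
  "path_decomp_width Xs = Max (card ` set Xs) - 1"

definition dpw :: "'v set \<Rightarrow> ('v \<times> 'v) set \<Rightarrow> nat" where
  "dpw V E = Inf {path_decomp_width Xs | Xs. is_dir_path_decomp V E Xs}"

definition is_walk_in :: "('v \<times> 'v) set \<Rightarrow> 'v set \<Rightarrow> 'v list \<Rightarrow> bool" where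
  "is_walk_in E U w \<longleftrightarrow> w \<noteq> [] \<and> set w \<subseteq> U \<and>
     (\<forall>i. Suc i < length w \<longrightarrow> (w ! i, w ! Suc i) \<in> E)"

definition is_normal :: "'v set \<Rightarrow> ('v \<times> 'v) set \<Rightarrow> 'v set \<Rightarrow> 'v set \<Rightarrow> bool" where
  "is_normal V E Z S \<longleftrightarrow>
     \<not> (\<exists>w. is_walk_in E (V - Z) w \<and> hd w \<in> S \<and> last w \<in> S \<and>
            (\<exists>x\<in>set w. x \<notin> Z \<union> S))"

definition is_out_tree :: "nat set \<Rightarrow> (nat \<times> nat) set \<Rightarrow> nat \<Rightarrow> bool" where
  "is_out_tree VT ET r \<longleftrightarrow> finite VT \<and> r \<in> VT \<and> ET \<subseteq> VT \<times> VT \<and>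
     (\<forall>v\<in>VT. (r, v) \<in> ET\<^sup>*) \<and> (\<forall>u. (u, r) \<notin> ET) \<and>
     (\<forall>v\<in>VT - {r}. \<exists>!u. (u, v) \<in> ET)"

definition is_dir_tree_decomp ::
  "'v set \<Rightarrow> ('v \<times> 'v) set \<Rightarrow> nat set \<Rightarrow> (nat \<times> nat) set \<Rightarrow> nat
     \<Rightarrow> (nat \<times> nat \<Rightarrow> 'v set) \<Rightarrow> (nat \<Rightarrow> 'v set) \<Rightarrow> bool" where
  "is_dir_tree_decomp V E VT ET r X W \<longleftrightarrow>
     is_out_tree VT ET r \<and>
     (\<forall>e\<in>ET. X e \<subseteq> V) \<and>
     (\<forall>s\<in>VT. W s \<subseteq> V \<and> W s \<noteq> {}) \<and>
     (\<forall>s\<in>VT. \<forall>s'\<in>VT. s \<noteq> s' \<longrightarrow> W s \<inter> W s' = {}) \<and>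
     (\<Union>s\<in>VT. W s) = V \<and>
     (\<forall>(u,v)\<in>ET. is_normal V E (X (u,v)) (\<Union>{W s | s. s \<in> VT \<and> (v, s) \<in> ET\<^sup>*}))"

definition tree_decomp_width ::
  "nat set \<Rightarrow> (nat \<times> nat) set \<Rightarrow> (nat \<times> nat \<Rightarrow> 'v set) \<Rightarrow> (nat \<Rightarrow> 'v set) \<Rightarrow> nat" where
  "tree_decomp_width VT ET X W =
     Max {card (W s \<union> \<Union>{X e | e. e \<in> ET \<and> (fst e = s \<or> snd e = s)}) | s. s \<in> VT} - 1"

definition dtw :: "'v set \<Rightarrow> ('v \<times> 'v) set \<Rightarrow> nat" where
  "dtw V E = Inf {tree_decomp_width VT ET X W | VT ET r X W. is_dir_tree_decomp V E VT ET r X W}"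

text \<open>With a fixed program,
  each node costs O(1) unit-cost operations, so the whole evaluation runs in
  time O(number of tree nodes) = O(|V|).\<close>
datatype aexp =
    AVar bool nat       (* False: left child, True: right child; component index *)
  | AConst nat
  | APlus aexp aexp
  | AMax aexp aexp
  | AMin aexp aexp

definition get :: "nat list \<Rightarrow> nat \<Rightarrow> nat" where
  "get xs i = (if i < length xs then xs ! i else 0)"

fun aeval :: "aexp \<Rightarrow> nat list \<Rightarrow> nat list \<Rightarrow> nat" where
  "aeval (AVar c i) l r = (if c then get r i else get l i)"
| "aeval (AConst n) l r = n"
| "aeval (APlus a b) l r = aeval a l r + aeval b l r"
| "aeval (AMax a b) l r = max (aeval a l r) (aeval b l r)"
| "aeval (AMin a b) l r = min (aeval a l r) (aeval b l r)"

datatype tree_prog = TreeProg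
  (leaf_init: "nat list") (union_code: "aexp list") (series_code: "aexp list")
  (order_code: "aexp list")

fun run :: "tree_prog \<Rightarrow> 'v dicotree \<Rightarrow> nat list" where
  "run P (Leaf v) = leaf_init P"
| "run P (DUnion a b) = map (\<lambda>e. aeval e (run P a) (run P b)) (union_code P)"
| "run P (DSeries a b) = map (\<lambda>e. aeval e (run P a) (run P b)) (series_code P)"
| "run P (DOrder a b) = map (\<lambda>e. aeval e (run P a) (run P b)) (order_code P)"

end

theory Submission
  imports Defs
begin

text \<open>Both widths of a co-graph equal the number cotree_width computed bottom-up on its
  di-co-tree: 0 at a leaf, the maximum of the two children at a disjoint union or an order
  composition, and min (w1 + |V2|) (w2 + |V1|) at a series composition.

  Upper bound: concatenating path decompositions handles union and order composition, and for a
  series composition one adds all vertices of one side to every bag of the other side.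
  Every directed path decomposition becomes a directed tree decomposition of no larger width on a
  path: list the vertices by their first bag; the node at position m carries the m-th vertex, and
  the arc into it is guarded by the first bag of that vertex minus the vertices from position m on.

  Lower bound: a bramble of pairwise touching bidirected cliques of order k forces a bag of size
  at least k in every directed tree decomposition, since a normal set cannot split a bidirected
  clique.  For a series composition such a bramble of order cotree_width + 1 consists of the
  brambles of both sides together with all pairs {u, v} across.\<close>

section \<open>Path decompositions of directed co-graphs\<close>

fun cotree_width :: "'v dicotree \<Rightarrow> nat" where
  "cotree_width (Leaf v) = 0"
| "cotree_width (DUnion a b) = max (cotree_width a) (cotree_width b)"
| "cotree_width (DOrder a b) = max (cotree_width a) (cotree_width b)"
| "cotree_width (DSeries a b) =
     min (cotree_width a + length (leaves b)) (cotree_width b + length (leaves a))"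

lemma verts_simps [simp]:
  "verts (Leaf v) = {v}"
  "verts (DUnion a b) = verts a \<union> verts b"
  "verts (DSeries a b) = verts a \<union> verts b"
  "verts (DOrder a b) = verts a \<union> verts b"
  by (auto simp: verts_def)

lemma finite_verts [simp]: "finite (verts t)"
  by (simp add: verts_def)

lemma verts_nonempty: "verts t \<noteq> {}"
  by (induction t) auto

lemma wf_dicotree_simps [simp]:
  "wf_dicotree (Leaf v)"
  "wf_dicotree (DUnion a b) \<longleftrightarrow> wf_dicotree a \<and> wf_dicotree b \<and> verts a \<inter> verts b = {}"
  "wf_dicotree (DSeries a b) \<longleftrightarrow> wf_dicotree a \<and> wf_dicotree b \<and> verts a \<inter> verts b = {}"
  "wf_dicotree (DOrder a b) \<longleftrightarrow> wf_dicotree a \<and> wf_dicotree b \<and> verts a \<inter> verts b = {}"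
  by (auto simp: wf_dicotree_def verts_def)

lemma card_verts: "wf_dicotree t \<Longrightarrow> card (verts t) = length (leaves t)"
  by (simp add: wf_dicotree_def verts_def distinct_card)

lemma set_leaves_eq_verts [simp]: "set (leaves t) = verts t"
  by (simp add: verts_def)

lemma arcs_subset_verts: "arcs t \<subseteq> verts t \<times> verts t"
  by (induction t) auto

lemma dir_path_decompI:
  assumes "\<And>X. X \<in> set Xs \<Longrightarrow> X \<subseteq> V"
    and "\<And>v. v \<in> V \<Longrightarrow> \<exists>i<length Xs. v \<in> Xs ! i"
    and "\<And>u v. (u, v) \<in> E \<Longrightarrow> \<exists>i j. i \<le> j \<and> j < length Xs \<and> u \<in> Xs ! i \<and> v \<in> Xs ! j"
    and "\<And>v i j k. \<lbrakk>i \<le> j; j \<le> k; k < length Xs; v \<in> Xs ! i; v \<in> Xs ! k\<rbrakk> \<Longrightarrow> v \<in> Xs ! j"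
  shows "is_dir_path_decomp V E Xs"
proof -
  have "V \<subseteq> \<Union>(set Xs)"
  proof
    fix v assume "v \<in> V"
    then obtain i where "i < length Xs" "v \<in> Xs ! i" using assms(2) by blast
    then show "v \<in> \<Union>(set Xs)" by auto
  qed
  then have "\<Union>(set Xs) = V" using assms(1) by blast
  with assms show ?thesis unfolding is_dir_path_decomp_def by (intro conjI) (blast, simp, fast, blast)
qed

lemma dir_path_decompD:
  assumes "is_dir_path_decomp V E Xs"
  shows "X \<in> set Xs \<Longrightarrow> X \<subseteq> V"
    and "v \<in> V \<Longrightarrow> \<exists>i<length Xs. v \<in> Xs ! i"
    and "(u, v) \<in> E \<Longrightarrow> \<exists>i j. i \<le> j \<and> j < length Xs \<and> u \<in> Xs ! i \<and> v \<in> Xs ! j"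
    and "\<lbrakk>i \<le> j; j \<le> k; k < length Xs; v \<in> Xs ! i; v \<in> Xs ! k\<rbrakk> \<Longrightarrow> v \<in> Xs ! j"
proof -
  note conj = assms[unfolded is_dir_path_decomp_def]
  have bags: "\<forall>X\<in>set Xs. X \<subseteq> V" using conj by (elim conjE)
  have cover: "\<Union>(set Xs) = V" using conj by (elim conjE)
  have arcs: "\<forall>(u,v)\<in>E. \<exists>i j. i \<le> j \<and> j < length Xs \<and> u \<in> Xs ! i \<and> v \<in> Xs ! j"
    using conj by (elim conjE)
  have interp: "\<forall>v i j k. i \<le> j \<and> j \<le> k \<and> k < length Xs \<and> v \<in> Xs ! i \<and> v \<in> Xs ! k \<longrightarrow> v \<in> Xs ! j"
    using conj by (elim conjE)
  show "X \<in> set Xs \<Longrightarrow> X \<subseteq> V" using bags by blast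
  show "v \<in> V \<Longrightarrow> \<exists>i<length Xs. v \<in> Xs ! i"
    using cover by (metis UnionE in_set_conv_nth)
  show "(u, v) \<in> E \<Longrightarrow> \<exists>i j. i \<le> j \<and> j < length Xs \<and> u \<in> Xs ! i \<and> v \<in> Xs ! j"
    using arcs by blast
  show "\<lbrakk>i \<le> j; j \<le> k; k < length Xs; v \<in> Xs ! i; v \<in> Xs ! k\<rbrakk> \<Longrightarrow> v \<in> Xs ! j"
    using interp by blast
qed

lemma dir_path_decomp_single_bag: "E \<subseteq> V \<times> V \<Longrightarrow> is_dir_path_decomp V E [V]"
  by (rule dir_path_decompI) auto

lemma mem_nth_append_between:
  assumes Xs: "\<And>i j k. \<lbrakk>i \<le> j; j \<le> k; k < length Xs; v \<in> Xs ! i; v \<in> Xs ! k\<rbrakk> \<Longrightarrow> v \<in> Xs ! j"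
    and Ys: "\<And>i j k. \<lbrakk>i \<le> j; j \<le> k; k < length Ys; v \<in> Ys ! i; v \<in> Ys ! k\<rbrakk> \<Longrightarrow> v \<in> Ys ! j"
    and not_both: "\<not> ((\<exists>X\<in>set Xs. v \<in> X) \<and> (\<exists>Y\<in>set Ys. v \<in> Y))"
    and ijk: "i \<le> j" "j \<le> k" "k < length (Xs @ Ys)" "v \<in> (Xs @ Ys) ! i" "v \<in> (Xs @ Ys) ! k"
  shows "v \<in> (Xs @ Ys) ! j"
proof -
  let ?n = "length Xs"
  consider "k < ?n" | "?n \<le> i" | "i < ?n" "?n \<le> k" by linarith
  then show ?thesis
  proof cases
    case 1
    then show ?thesis using ijk Xs[of i j k] by (auto simp: nth_append)
  next
    case 2
    then show ?thesis using ijk Ys[of "i - ?n" "j - ?n" "k - ?n"] by (auto simp: nth_append)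
  next
    case 3
    then have "Xs ! i \<in> set Xs" "Ys ! (k - ?n) \<in> set Ys" "v \<in> Xs ! i" "v \<in> Ys ! (k - ?n)"
      using ijk by (auto simp: nth_append)
    then show ?thesis using not_both by blast
  qed
qed

lemma dir_path_decomp_append:
  assumes A: "is_dir_path_decomp Va Ea Xs" and B: "is_dir_path_decomp Vb Eb Ys"
    and disj: "Va \<inter> Vb = {}" and E: "E \<subseteq> Ea \<union> Eb \<union> Va \<times> Vb"
  shows "is_dir_path_decomp (Va \<union> Vb) E (Xs @ Ys)"
proof (rule dir_path_decompI)
  let ?n = "length Xs"
  have in_left: "\<exists>i<?n. v \<in> (Xs @ Ys) ! i" if "v \<in> Va" for v
    using dir_path_decompD(2)[OF A that] by (auto simp: nth_append)
  have in_right: "\<exists>j<length Ys. v \<in> (Xs @ Ys) ! (?n + j)" if "v \<in> Vb" for v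
    using dir_path_decompD(2)[OF B that] by auto
  show "X \<subseteq> Va \<union> Vb" if "X \<in> set (Xs @ Ys)" for X
    using that dir_path_decompD(1)[OF A] dir_path_decompD(1)[OF B] by auto
  show "\<exists>i<length (Xs @ Ys). v \<in> (Xs @ Ys) ! i" if "v \<in> Va \<union> Vb" for v
    using that in_left in_right by (metis UnE add_less_cancel_left length_append trans_less_add1)
  show "\<exists>i j. i \<le> j \<and> j < length (Xs @ Ys) \<and> u \<in> (Xs @ Ys) ! i \<and> v \<in> (Xs @ Ys) ! j"
    if uv: "(u, v) \<in> E" for u v
  proof -
    consider "(u, v) \<in> Ea" | "(u, v) \<in> Eb" | "u \<in> Va" "v \<in> Vb" using uv E by blast
    then show ?thesis
    proof cases
      case 1
      then obtain i j where "i \<le> j" "j < ?n" "u \<in> Xs ! i" "v \<in> Xs ! j"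
        using dir_path_decompD(3)[OF A] by blast
      then show ?thesis by (intro exI[of _ i] exI[of _ j]) (auto simp: nth_append)
    next
      case 2
      then obtain i j where "i \<le> j" "j < length Ys" "u \<in> Ys ! i" "v \<in> Ys ! j"
        using dir_path_decompD(3)[OF B] by blast
      then show ?thesis by (intro exI[of _ "?n + i"] exI[of _ "?n + j"]) auto
    next
      case 3
      then obtain i j where "i < ?n" "u \<in> (Xs @ Ys) ! i" "j < length Ys" "v \<in> (Xs @ Ys) ! (?n + j)"
        using in_left in_right by blast
      then show ?thesis by (intro exI[of _ i] exI[of _ "?n + j"]) auto
    qed
  qed
  show "v \<in> (Xs @ Ys) ! j"
    if "i \<le> j" "j \<le> k" "k < length (Xs @ Ys)" "v \<in> (Xs @ Ys) ! i" "v \<in> (Xs @ Ys) ! k"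
    for v i j k
  proof (rule mem_nth_append_between[OF dir_path_decompD(4)[OF A] dir_path_decompD(4)[OF B] _ that])
    show "\<not> ((\<exists>X\<in>set Xs. v \<in> X) \<and> (\<exists>Y\<in>set Ys. v \<in> Y))"
      using disj dir_path_decompD(1)[OF A] dir_path_decompD(1)[OF B] by blast
  qed
qed

lemma dir_path_decomp_extend:
  assumes A: "is_dir_path_decomp Va Ea Xs" and ne: "Xs \<noteq> []"
    and E: "E \<subseteq> Ea \<union> Vb \<times> (Va \<union> Vb) \<union> (Va \<union> Vb) \<times> Vb"
  shows "is_dir_path_decomp (Va \<union> Vb) E (map (\<lambda>X. X \<union> Vb) Xs)"
proof (rule dir_path_decompI)
  let ?Ys = "map (\<lambda>X. X \<union> Vb) Xs"
  show in_bag: "\<exists>i<length ?Ys. v \<in> ?Ys ! i" if "v \<in> Va \<union> Vb" for v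
    using that dir_path_decompD(2)[OF A] ne by fastforce
  show "X \<subseteq> Va \<union> Vb" if "X \<in> set ?Ys" for X
    using that dir_path_decompD(1)[OF A] by auto
  show "\<exists>i j. i \<le> j \<and> j < length ?Ys \<and> u \<in> ?Ys ! i \<and> v \<in> ?Ys ! j"
    if uv: "(u, v) \<in> E" for u v
  proof -
    consider "(u, v) \<in> Ea" | "u \<in> Vb" "v \<in> Va \<union> Vb" | "u \<in> Va \<union> Vb" "v \<in> Vb"
      using uv E by blast
    then show ?thesis
    proof cases
      case 1
      then obtain i j where "i \<le> j" "j < length Xs" "u \<in> Xs ! i" "v \<in> Xs ! j"
        using dir_path_decompD(3)[OF A] by blast
      then show ?thesis by (intro exI[of _ i] exI[of _ j]) auto
    next
      case 2
      then obtain j where "j < length ?Ys" "v \<in> ?Ys ! j" using in_bag by blast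
      then show ?thesis using 2 by (intro exI[of _ j] exI[of _ j]) auto
    next
      case 3
      then obtain j where "j < length ?Ys" "u \<in> ?Ys ! j" using in_bag by blast
      then show ?thesis using 3 by (intro exI[of _ j] exI[of _ j]) auto
    qed
  qed
  show "v \<in> ?Ys ! j"
    if "i \<le> j" "j \<le> k" "k < length ?Ys" "v \<in> ?Ys ! i" "v \<in> ?Ys ! k" for v i j k
    using that dir_path_decompD(4)[OF A, of i j k v] by auto
qed

lemma path_decomp_width_le:
  assumes "Xs \<noteq> []" and "\<And>X. X \<in> set Xs \<Longrightarrow> card X \<le> k + 1"
  shows "path_decomp_width Xs \<le> k"
proof -
  have "Max (card ` set Xs) \<le> k + 1" using assms by (subst Max_le_iff) auto
  then show ?thesis unfolding path_decomp_width_def by simp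
qed

fun cotree_path_decomp :: "'v dicotree \<Rightarrow> 'v set list" where
  "cotree_path_decomp (Leaf v) = [{v}]"
| "cotree_path_decomp (DUnion a b) = cotree_path_decomp a @ cotree_path_decomp b"
| "cotree_path_decomp (DOrder a b) = cotree_path_decomp a @ cotree_path_decomp b"
| "cotree_path_decomp (DSeries a b) =
     (if cotree_width a + length (leaves b) \<le> cotree_width b + length (leaves a)
      then map (\<lambda>X. X \<union> verts b) (cotree_path_decomp a)
      else map (\<lambda>X. X \<union> verts a) (cotree_path_decomp b))"

lemma dir_path_decomp_series:
  assumes "is_dir_path_decomp (verts a) (arcs a) Xs" and "Xs \<noteq> []"
  shows "is_dir_path_decomp (verts (DSeries a b)) (arcs (DSeries a b)) (map (\<lambda>X. X \<union> verts b) Xs)"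
proof -
  have "arcs (DSeries a b) \<subseteq> arcs a \<union> verts b \<times> (verts a \<union> verts b) \<union> (verts a \<union> verts b) \<times> verts b"
    using arcs_subset_verts[of b] by auto
  from dir_path_decomp_extend[OF assms this] show ?thesis by simp
qed

lemma dir_path_decomp_DSeries_commute:
  "is_dir_path_decomp (verts (DSeries a b)) (arcs (DSeries a b)) Xs
     \<longleftrightarrow> is_dir_path_decomp (verts (DSeries b a)) (arcs (DSeries b a)) Xs"
  by (simp add: Un_commute Un_left_commute)

lemma card_Un_verts_le:
  "card X \<le> k + 1 \<Longrightarrow> wf_dicotree t \<Longrightarrow> card (X \<union> verts t) \<le> k + length (leaves t) + 1"
  using card_Un_le[of X "verts t"] card_verts[of t] by linarith

lemma cotree_path_decomp_valid:
  "wf_dicotree t \<Longrightarrow> is_dir_path_decomp (verts t) (arcs t) (cotree_path_decomp t)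
     \<and> cotree_path_decomp t \<noteq> []
     \<and> (\<forall>X\<in>set (cotree_path_decomp t). card X \<le> cotree_width t + 1)"
proof (induction t)
  case (Leaf v)
  then show ?case by (auto simp: is_dir_path_decomp_def)
next
  case (DUnion a b)
  then have "is_dir_path_decomp (verts a \<union> verts b) (arcs (DUnion a b))
      (cotree_path_decomp a @ cotree_path_decomp b)"
    by (intro dir_path_decomp_append[where Ea = "arcs a" and Eb = "arcs b"]) auto
  with DUnion show ?case by auto
next
  case (DOrder a b)
  then have "is_dir_path_decomp (verts a \<union> verts b) (arcs (DOrder a b))
      (cotree_path_decomp a @ cotree_path_decomp b)"
    by (intro dir_path_decomp_append[where Ea = "arcs a" and Eb = "arcs b"]) auto
  with DOrder show ?case by auto
next
  case (DSeries a b)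
  then have a: "wf_dicotree a" and b: "wf_dicotree b" by auto
  show ?case
  proof (cases "cotree_width a + length (leaves b) \<le> cotree_width b + length (leaves a)")
    case True
    have "is_dir_path_decomp (verts (DSeries a b)) (arcs (DSeries a b))
        (map (\<lambda>X. X \<union> verts b) (cotree_path_decomp a))"
      using DSeries.IH(1)[OF a] dir_path_decomp_series by blast
    moreover have "\<forall>X\<in>set (cotree_path_decomp a). card (X \<union> verts b) \<le> cotree_width (DSeries a b) + 1"
      using True DSeries.IH(1)[OF a] card_Un_verts_le[OF _ b] by fastforce
    ultimately show ?thesis using True DSeries.IH(1)[OF a] by simp
  next
    case False
    have "is_dir_path_decomp (verts (DSeries a b)) (arcs (DSeries a b))
        (map (\<lambda>X. X \<union> verts a) (cotree_path_decomp b))"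
      using DSeries.IH(2)[OF b] dir_path_decomp_series dir_path_decomp_DSeries_commute by blast
    moreover have "\<forall>X\<in>set (cotree_path_decomp b). card (X \<union> verts a) \<le> cotree_width (DSeries a b) + 1"
      using False DSeries.IH(2)[OF b] card_Un_verts_le[OF _ a] by fastforce
    ultimately show ?thesis using False DSeries.IH(2)[OF b] by simp
  qed
qed

lemma dpw_le_cotree_width: "wf_dicotree t \<Longrightarrow> dpw (verts t) (arcs t) \<le> cotree_width t"
proof -
  assume "wf_dicotree t"
  then have P: "is_dir_path_decomp (verts t) (arcs t) (cotree_path_decomp t)"
    and "path_decomp_width (cotree_path_decomp t) \<le> cotree_width t"
    using cotree_path_decomp_valid path_decomp_width_le by blast+
  moreover have "dpw (verts t) (arcs t) \<le> path_decomp_width (cotree_path_decomp t)"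
    unfolding dpw_def using P by (intro wellorder_Inf_le1) blast
  ultimately show ?thesis by simp
qed

section \<open>From path decompositions to tree decompositions\<close>

definition first_bag :: "'v set list \<Rightarrow> 'v \<Rightarrow> nat" where
  "first_bag Xs v = (LEAST i. i < length Xs \<and> v \<in> Xs ! i)"

lemma first_bag_in:
  assumes "is_dir_path_decomp V E Xs" and "v \<in> V"
  shows "first_bag Xs v < length Xs \<and> v \<in> Xs ! first_bag Xs v"
  using dir_path_decompD(2)[OF assms] unfolding first_bag_def by (metis (mono_tags) LeastI)

lemma first_bag_le: "i < length Xs \<Longrightarrow> v \<in> Xs ! i \<Longrightarrow> first_bag Xs v \<le> i"
  unfolding first_bag_def by (simp add: Least_le)

lemma dir_path_decomp_normal_suffix:
  assumes P: "is_dir_path_decomp V E Xs" and p: "p < length Xs"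
    and late: "\<And>x i. x \<in> S \<Longrightarrow> i < length Xs \<Longrightarrow> x \<in> Xs ! i \<Longrightarrow> p \<le> i"
    and early: "\<And>x. x \<in> V - S \<Longrightarrow> \<exists>i\<le>p. x \<in> Xs ! i"
  shows "is_normal V E (Xs ! p - S) S"
  unfolding is_normal_def
proof
  let ?Z = "Xs ! p - S"
  \<comment> \<open>A walk from S to a vertex outside S and the separator has an arc from a vertex occurring
    in a bag at or after p to one occurring only before p; the tail of that arc is then in
    bag p but not in S, i.e. in the separator.\<close>
  define seen_late where "seen_late x \<longleftrightarrow> (\<exists>j. p \<le> j \<and> j < length Xs \<and> x \<in> Xs ! j)" for x
  have bag_p: "x \<in> Xs ! p" if "x \<in> Xs ! i" "i \<le> p" "seen_late x" for x i
    using that dir_path_decompD(4)[OF P, of i p] unfolding seen_late_def by blast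
  assume "\<exists>w. is_walk_in E (V - ?Z) w \<and> hd w \<in> S \<and> last w \<in> S \<and> (\<exists>x\<in>set w. x \<notin> ?Z \<union> S)"
  then obtain w q where walk: "is_walk_in E (V - ?Z) w" and start: "hd w \<in> S"
    and q: "q < length w" "w ! q \<notin> ?Z \<union> S"
    by (metis in_set_conv_nth)
  have w_ne: "w \<noteq> []" and w_V: "set w \<subseteq> V - ?Z"
    and w_arc: "\<And>i. Suc i < length w \<Longrightarrow> (w ! i, w ! Suc i) \<in> E"
    using walk unfolding is_walk_in_def by auto
  have "hd w \<in> V" using w_ne w_V hd_in_set by blast
  then obtain i where "i < length Xs" "hd w \<in> Xs ! i" using dir_path_decompD(2)[OF P] by blast
  then have "seen_late (w ! 0)" using late[OF start] w_ne by (auto simp: seen_late_def hd_conv_nth)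
  moreover have "\<not> seen_late (w ! q)"
  proof
    assume "seen_late (w ! q)"
    moreover have "w ! q \<in> V - S" using q w_V nth_mem by blast
    ultimately show False using early bag_p q(2) by blast
  qed
  ultimately obtain t where t: "t < q" "seen_late (w ! t)" "\<not> seen_late (w ! Suc t)"
    using ex_least_nat_less[of "\<lambda>i. \<not> seen_late (w ! i)" q] by auto
  obtain i j where ij: "i \<le> j" "j < length Xs" "w ! t \<in> Xs ! i" "w ! Suc t \<in> Xs ! j"
    using dir_path_decompD(3)[OF P w_arc] t q by (meson Suc_leI le_less_trans)
  have "j < p" using ij t(3) unfolding seen_late_def by force
  then have "w ! t \<in> Xs ! p" "w ! t \<notin> S"
    using ij t(2) bag_p late[of "w ! t" i] by force+
  moreover have "w ! t \<in> V - ?Z" using t q w_V nth_mem by (meson order.strict_trans subsetD)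
  ultimately show False by blast
qed

lemma in_set_drop_conv_nth:
  "x \<in> set (drop m xs) \<longleftrightarrow> (\<exists>i. m \<le> i \<and> i < length xs \<and> x = xs ! i)"
proof
  assume "x \<in> set (drop m xs)"
  then obtain j where "j < length xs - m" "x = xs ! (m + j)" by (auto simp: in_set_conv_nth)
  then show "\<exists>i. m \<le> i \<and> i < length xs \<and> x = xs ! i" by (intro exI[of _ "m + j"]) auto
next
  assume "\<exists>i. m \<le> i \<and> i < length xs \<and> x = xs ! i"
  then obtain i where "m \<le> i" "i < length xs" "x = xs ! i" by blast
  then have "drop m xs ! (i - m) = x" "i - m < length (drop m xs)" by auto
  then show "x \<in> set (drop m xs)" by (metis nth_mem)
qed

lemma in_set_take_conv_nth: "x \<in> set (take m xs) \<longleftrightarrow> (\<exists>i<m. i < length xs \<and> x = xs ! i)"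
  by (auto simp: in_set_conv_nth)
definition path_arcs :: "nat \<Rightarrow> (nat \<times> nat) set" where
  "path_arcs n = {(k, Suc k) | k. Suc k < n}"

lemma rtrancl_path_arcs_iff:
  assumes "a < n"
  shows "(a, b) \<in> (path_arcs n)\<^sup>* \<longleftrightarrow> a \<le> b \<and> b < n"
proof
  assume "(a, b) \<in> (path_arcs n)\<^sup>*"
  then show "a \<le> b \<and> b < n" using assms by induction (auto simp: path_arcs_def)
next
  assume "a \<le> b \<and> b < n"
  then have "a \<le> b" "b < n" by auto
  then show "(a, b) \<in> (path_arcs n)\<^sup>*"
  proof (induction b rule: dec_induct)
    case (step m)
    then have "(m, Suc m) \<in> path_arcs n" by (auto simp: path_arcs_def)
    with step show ?case by (meson Suc_lessD rtrancl.rtrancl_into_rtrancl)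
  qed simp
qed

lemma out_tree_path_arcs:
  assumes "0 < n"
  shows "is_out_tree {..<n} (path_arcs n) 0"
  unfolding is_out_tree_def
proof (intro conjI ballI allI)
  show "(0, v) \<in> (path_arcs n)\<^sup>*" if "v \<in> {..<n}" for v
    using that rtrancl_path_arcs_iff[OF assms] by simp
  show "\<exists>!u. (u, v) \<in> path_arcs n" if "v \<in> {..<n} - {0}" for v
  proof -
    from that obtain k where "v = Suc k" "Suc k < n" by (cases v) auto
    then show ?thesis by (auto simp: path_arcs_def)
  qed
qed (use assms in \<open>auto simp: path_arcs_def\<close>)

definition tree_bag ::
  "(nat \<times> nat) set \<Rightarrow> (nat \<times> nat \<Rightarrow> 'v set) \<Rightarrow> (nat \<Rightarrow> 'v set) \<Rightarrow> nat \<Rightarrow> 'v set" where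
  "tree_bag ET X W s = W s \<union> \<Union>{X e | e. e \<in> ET \<and> (fst e = s \<or> snd e = s)}"

lemma tree_decomp_width_tree_bag:
  "tree_decomp_width VT ET X W = Max ((\<lambda>s. card (tree_bag ET X W s)) ` VT) - 1"
  unfolding tree_decomp_width_def tree_bag_def by (simp add: Setcompr_eq_image)

definition path_tree_separator :: "'v set list \<Rightarrow> 'v list \<Rightarrow> nat \<times> nat \<Rightarrow> 'v set" where
  "path_tree_separator Xs vs e = Xs ! first_bag Xs (vs ! snd e) - set (drop (snd e) vs)"

lemma sorted_map_nth_mono:
  "sorted (map f xs) \<Longrightarrow> i \<le> j \<Longrightarrow> j < length xs \<Longrightarrow> f (xs ! i) \<le> f (xs ! j)"
  using sorted_nth_mono[of "map f xs" i j] by simp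

lemma path_tree_separator_normal:
  assumes P: "is_dir_path_decomp V E Xs"
    and vs: "set vs = V" "sorted (map (first_bag Xs) vs)" and m: "m < length vs"
  shows "is_normal V E (path_tree_separator Xs vs (k, m)) (set (drop m vs))"
proof -
  let ?fb = "first_bag Xs"
  have "vs ! m \<in> V" using m vs(1) nth_mem by blast
  then have p: "?fb (vs ! m) < length Xs" using first_bag_in[OF P] by blast
  show ?thesis unfolding path_tree_separator_def snd_conv
  proof (rule dir_path_decomp_normal_suffix[OF P p])
    show "?fb (vs ! m) \<le> i" if "x \<in> set (drop m vs)" "i < length Xs" "x \<in> Xs ! i" for x i
      using that sorted_map_nth_mono[OF vs(2)] first_bag_le[of i Xs x]
      by (force simp: in_set_drop_conv_nth)
    show "\<exists>i\<le>?fb (vs ! m). x \<in> Xs ! i" if "x \<in> V - set (drop m vs)" for x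
    proof -
      have "x \<in> set (take m vs)" using that vs(1) by (metis DiffE UnE append_take_drop_id set_append)
      then have "?fb x \<le> ?fb (vs ! m)"
        using sorted_map_nth_mono[OF vs(2)] m by (force simp: in_set_take_conv_nth)
      then show ?thesis using first_bag_in[OF P] that by blast
    qed
  qed
qed

lemma dir_tree_decomp_along_path:
  assumes P: "is_dir_path_decomp V E Xs"
    and vs: "set vs = V" "distinct vs" "sorted (map (first_bag Xs) vs)" "vs \<noteq> []"
  shows "is_dir_tree_decomp V E {..<length vs} (path_arcs (length vs)) 0
           (path_tree_separator Xs vs) (\<lambda>k. {vs ! k})"
proof -
  let ?n = "length vs"
  have subtree: "\<Union>{{vs ! s} | s. s \<in> {..<?n} \<and> (m, s) \<in> (path_arcs ?n)\<^sup>*} = set (drop m vs)"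
    if "m < ?n" for m
  proof -
    have "\<Union>{{vs ! s} | s. s \<in> {..<?n} \<and> (m, s) \<in> (path_arcs ?n)\<^sup>*} = {vs ! s | s. m \<le> s \<and> s < ?n}"
      using rtrancl_path_arcs_iff[OF that] by blast
    also have "\<dots> = set (drop m vs)" by (auto simp: in_set_drop_conv_nth)
    finally show ?thesis .
  qed
  have separator_subset: "path_tree_separator Xs vs e \<subseteq> V" if "e \<in> path_arcs ?n" for e
  proof -
    from that have "snd e < ?n" by (auto simp: path_arcs_def)
    then have "vs ! snd e \<in> V" using vs(1) nth_mem by blast
    then have "Xs ! first_bag Xs (vs ! snd e) \<subseteq> V"
      using first_bag_in[OF P] dir_path_decompD(1)[OF P] nth_mem by blast
    then show ?thesis by (auto simp: path_tree_separator_def)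
  qed
  show ?thesis unfolding is_dir_tree_decomp_def
  proof (intro conjI)
    show "is_out_tree {..<?n} (path_arcs ?n) 0" using vs(4) by (simp add: out_tree_path_arcs)
    show "\<forall>e\<in>path_arcs ?n. path_tree_separator Xs vs e \<subseteq> V" using separator_subset by blast
    show "\<forall>s\<in>{..<?n}. {vs ! s} \<subseteq> V \<and> {vs ! s} \<noteq> {}" using vs(1) by auto
    show "\<forall>s\<in>{..<?n}. \<forall>s'\<in>{..<?n}. s \<noteq> s' \<longrightarrow> {vs ! s} \<inter> {vs ! s'} = {}"
      using vs(2) by (auto simp: nth_eq_iff_index_eq)
    show "(\<Union>s\<in>{..<?n}. {vs ! s}) = V" using vs(1) by (auto simp: in_set_conv_nth)
    show "\<forall>(u, v)\<in>path_arcs ?n. is_normal V E (path_tree_separator Xs vs (u, v))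
        (\<Union>{{vs ! s} | s. s \<in> {..<?n} \<and> (v, s) \<in> (path_arcs ?n)\<^sup>*})"
      using subtree path_tree_separator_normal[OF P vs(1,3)] by (auto simp: path_arcs_def)
  qed
qed

lemma tree_bag_along_path_subset:
  assumes P: "is_dir_path_decomp V E Xs"
    and vs: "set vs = V" "sorted (map (first_bag Xs) vs)" and s: "s < length vs"
  shows "tree_bag (path_arcs (length vs)) (path_tree_separator Xs vs) (\<lambda>k. {vs ! k}) s
           \<subseteq> Xs ! first_bag Xs (vs ! s)"
proof -
  let ?n = "length vs" and ?fb = "first_bag Xs"
  have out_arc: "path_tree_separator Xs vs (s, Suc s) \<subseteq> Xs ! ?fb (vs ! s)" if "Suc s < ?n"
  proof
    fix u assume u: "u \<in> path_tree_separator Xs vs (s, Suc s)"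
    have "vs ! Suc s \<in> V" using that vs(1) nth_mem by blast
    then have bag: "u \<in> Xs ! ?fb (vs ! Suc s)" "?fb (vs ! Suc s) < length Xs"
      using u first_bag_in[OF P] by (auto simp: path_tree_separator_def)
    then have "u \<in> V" using dir_path_decompD(1)[OF P] nth_mem by blast
    moreover have "u \<notin> set (drop (Suc s) vs)" using u by (simp add: path_tree_separator_def)
    ultimately have "u \<in> set (take (Suc s) vs)" using vs(1) by (metis UnE append_take_drop_id set_append)
    then obtain i where "i \<le> s" "u = vs ! i" by (auto simp: in_set_take_conv_nth less_Suc_eq_le)
    then have "?fb u \<le> ?fb (vs ! s)" "?fb (vs ! s) \<le> ?fb (vs ! Suc s)"
      using sorted_map_nth_mono[OF vs(2)] s that by auto
    then show "u \<in> Xs ! ?fb (vs ! s)"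
      using dir_path_decompD(4)[OF P] first_bag_in[OF P \<open>u \<in> V\<close>] bag by blast
  qed
  have "vs ! s \<in> Xs ! ?fb (vs ! s)" using first_bag_in[OF P] s vs(1) nth_mem by blast
  moreover have "path_tree_separator Xs vs e \<subseteq> Xs ! ?fb (vs ! s)"
    if "e \<in> path_arcs ?n" "fst e = s \<or> snd e = s" for e
    using that out_arc by (auto simp: path_arcs_def path_tree_separator_def)
  ultimately show ?thesis unfolding tree_bag_def by blast
qed

lemma dir_tree_decomp_of_path_decomp:
  assumes P: "is_dir_path_decomp V E Xs" and "finite V" and "V \<noteq> {}"
  obtains VT ET r X W where "is_dir_tree_decomp V E VT ET r X W"
    and "tree_decomp_width VT ET X W \<le> path_decomp_width Xs"
proof -
  obtain L where L: "set L = V" "distinct L" using finite_distinct_list[OF \<open>finite V\<close>] by blast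
  define vs where "vs = sort_key (first_bag Xs) L"
  have vs: "set vs = V" "distinct vs" "sorted (map (first_bag Xs) vs)"
    using L by (simp_all add: vs_def)
  with \<open>V \<noteq> {}\<close> have "vs \<noteq> []" by auto
  let ?bag = "tree_bag (path_arcs (length vs)) (path_tree_separator Xs vs) (\<lambda>k. {vs ! k})"
  have "card (?bag s) \<le> Max (card ` set Xs)" if "s < length vs" for s
  proof -
    have "vs ! s \<in> V" using that vs(1) nth_mem by blast
    then have bag: "Xs ! first_bag Xs (vs ! s) \<in> set Xs" using first_bag_in[OF P] by simp
    then have "finite (Xs ! first_bag Xs (vs ! s))"
      using dir_path_decompD(1)[OF P] \<open>finite V\<close> finite_subset by blast
    then have "card (?bag s) \<le> card (Xs ! first_bag Xs (vs ! s))"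
      using tree_bag_along_path_subset[OF P vs(1,3) that] card_mono by blast
    also have "\<dots> \<le> Max (card ` set Xs)" using bag by simp
    finally show ?thesis .
  qed
  then have "Max ((\<lambda>s. card (?bag s)) ` {..<length vs}) \<le> Max (card ` set Xs)"
    using \<open>vs \<noteq> []\<close> by (subst Max_le_iff) auto
  then have "tree_decomp_width {..<length vs} (path_arcs (length vs)) (path_tree_separator Xs vs)
      (\<lambda>k. {vs ! k}) \<le> path_decomp_width Xs"
    unfolding tree_decomp_width_tree_bag path_decomp_width_def by (rule diff_le_mono)
  with dir_tree_decomp_along_path[OF P vs \<open>vs \<noteq> []\<close>] show ?thesis by (rule that)
qed

lemma dtw_le_dpw:
  assumes "finite V" and "V \<noteq> {}" and "E \<subseteq> V \<times> V"
  shows "dtw V E \<le> dpw V E"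
proof -
  have "dpw V E \<in> {path_decomp_width Xs | Xs. is_dir_path_decomp V E Xs}"
    unfolding dpw_def using dir_path_decomp_single_bag[OF assms(3)] by (intro wellorder_InfI) blast
  then obtain Xs where Xs: "is_dir_path_decomp V E Xs" "dpw V E = path_decomp_width Xs" by auto
  obtain VT ET r X W where "is_dir_tree_decomp V E VT ET r X W"
    and "tree_decomp_width VT ET X W \<le> path_decomp_width Xs"
    using dir_tree_decomp_of_path_decomp[OF Xs(1) assms(1,2)] .
  moreover from this(1) have "dtw V E \<le> tree_decomp_width VT ET X W"
    unfolding dtw_def by (intro wellorder_Inf_le1) blast
  ultimately show ?thesis using Xs(2) by simp
qed

section \<open>Brambles of bidirected cliques\<close>

definition bidirected :: "('v \<times> 'v) set \<Rightarrow> 'v \<Rightarrow> 'v \<Rightarrow> bool" where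
  "bidirected E x y \<longleftrightarrow> (x, y) \<in> E \<and> (y, x) \<in> E"

definition bidirected_clique :: "('v \<times> 'v) set \<Rightarrow> 'v set \<Rightarrow> bool" where
  "bidirected_clique E b \<longleftrightarrow> (\<forall>x\<in>b. \<forall>y\<in>b. x \<noteq> y \<longrightarrow> bidirected E x y)"

definition touching :: "('v \<times> 'v) set \<Rightarrow> 'v set \<Rightarrow> 'v set \<Rightarrow> bool" where
  "touching E b b' \<longleftrightarrow> b \<inter> b' \<noteq> {} \<or> (\<exists>x\<in>b. \<exists>y\<in>b'. bidirected E x y)"

definition clique_bramble :: "'v set \<Rightarrow> ('v \<times> 'v) set \<Rightarrow> 'v set set \<Rightarrow> nat \<Rightarrow> bool" where
  "clique_bramble V E B k \<longleftrightarrow>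
     (\<forall>b\<in>B. b \<noteq> {} \<and> b \<subseteq> V \<and> bidirected_clique E b) \<and>
     (\<forall>b\<in>B. \<forall>b'\<in>B. touching E b b') \<and>
     (\<forall>Y\<subseteq>V. card Y < k \<longrightarrow> (\<exists>b\<in>B. b \<inter> Y = {}))"

lemma clique_brambleI:
  assumes "\<And>b. b \<in> B \<Longrightarrow> b \<noteq> {} \<and> b \<subseteq> V \<and> bidirected_clique E b"
    and "\<And>b b'. b \<in> B \<Longrightarrow> b' \<in> B \<Longrightarrow> touching E b b'"
    and "\<And>Y. Y \<subseteq> V \<Longrightarrow> card Y < k \<Longrightarrow> \<exists>b\<in>B. b \<inter> Y = {}"
  shows "clique_bramble V E B k"
  using assms unfolding clique_bramble_def by blast

lemma clique_brambleD:
  assumes "clique_bramble V E B k"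
  shows "b \<in> B \<Longrightarrow> b \<noteq> {}" and "b \<in> B \<Longrightarrow> b \<subseteq> V" and "b \<in> B \<Longrightarrow> bidirected_clique E b"
    and "b \<in> B \<Longrightarrow> b' \<in> B \<Longrightarrow> touching E b b'"
    and "Y \<subseteq> V \<Longrightarrow> card Y < k \<Longrightarrow> \<exists>b\<in>B. b \<inter> Y = {}"
  using assms unfolding clique_bramble_def by blast+

lemma normal_no_bidirected_exit:
  assumes "is_normal V E Z S" and "x \<in> S" "y \<notin> S" and "x \<in> V - Z" "y \<in> V - Z"
  shows "\<not> bidirected E x y"
proof
  assume "bidirected E x y"
  then have "is_walk_in E (V - Z) [x, y, x]"
    using assms(4,5) by (auto simp: is_walk_in_def bidirected_def less_Suc_eq nth_Cons split: nat.splits)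
  moreover have "y \<in> set [x, y, x]" "y \<notin> Z \<union> S" using assms(3,5) by auto
  ultimately show False using assms(1,2) unfolding is_normal_def by fastforce
qed

lemma bidirected_clique_inside_or_outside_normal:
  assumes "is_normal V E Z S" and "bidirected_clique E b" and "b \<subseteq> V - Z"
  shows "b \<subseteq> S \<or> b \<inter> S = {}"
proof (rule ccontr)
  assume "\<not> ?thesis"
  then obtain x y where xy: "x \<in> b" "x \<in> S" "y \<in> b" "y \<notin> S" by blast
  then have "x \<noteq> y" by blast
  with xy have "bidirected E x y" using assms(2) unfolding bidirected_clique_def by blast
  moreover have "x \<in> V - Z" "y \<in> V - Z" using xy assms(3) by auto
  ultimately show False using normal_no_bidirected_exit[OF assms(1)] xy by blast
qed

lemma touching_crosses_normal:
  assumes "is_normal V E Z S" and "touching E b b'" and "b \<subseteq> S" and "b \<subseteq> V - Z" "b' \<subseteq> V - Z"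
  shows "b' \<inter> S \<noteq> {}"
proof
  assume disjoint: "b' \<inter> S = {}"
  then have "b \<inter> b' = {}" using assms(3) by blast
  then obtain x y where xy: "x \<in> b" "y \<in> b'" "bidirected E x y"
    using assms(2) unfolding touching_def by blast
  moreover have "x \<in> S" "y \<notin> S" "x \<in> V - Z" "y \<in> V - Z" using xy assms(3-5) disjoint by auto
  ultimately show False using normal_no_bidirected_exit[OF assms(1)] by blast
qed

lemma out_tree_acyclic:
  assumes T: "is_out_tree VT ET r"
  shows "acyclic ET"
  unfolding acyclic_def
proof
  fix s
  from T have sub: "ET \<subseteq> VT \<times> VT" and reach: "\<forall>v\<in>VT. (r, v) \<in> ET\<^sup>*"
    and no_in: "\<forall>u. (u, r) \<notin> ET" and parent: "\<forall>v\<in>VT - {r}. \<exists>!u. (u, v) \<in> ET"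
    unfolding is_out_tree_def by auto
  have "(v, v) \<notin> ET\<^sup>+" if "(r, v) \<in> ET\<^sup>*" for v
    using that
  proof (induction rule: rtrancl_induct)
    case base
    show ?case using no_in by (metis tranclD2)
  next
    case (step u v)
    show ?case
    proof
      assume "(v, v) \<in> ET\<^sup>+"
      then obtain y where y: "(y, v) \<in> ET" "(v, y) \<in> ET\<^sup>*" by (meson tranclD2)
      have "v \<in> VT - {r}" using step(2) sub no_in by blast
      then have "y = u" using parent y(1) step(2) by blast
      then have "(u, u) \<in> ET\<^sup>+" using step(2) y(2) by (simp add: rtrancl_into_trancl2)
      then show False using step(3) by blast
    qed
  qed
  moreover have "(s, s) \<in> ET\<^sup>+ \<Longrightarrow> s \<in> VT" using sub by (metis mem_Sigma_iff subsetD tranclE)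
  ultimately show "(s, s) \<notin> ET\<^sup>+" using reach by blast
qed

lemma wf_converse_out_tree:
  assumes "is_out_tree VT ET r"
  shows "wf (ET\<inverse>)"
proof (rule finite_acyclic_wf_converse)
  from assms have "ET \<subseteq> VT \<times> VT" "finite VT" by (simp_all add: is_out_tree_def)
  then show "finite ET" by (meson finite_SigmaI finite_subset)
  show "acyclic ET" using assms by (rule out_tree_acyclic)
qed

definition subtree_verts :: "nat set \<Rightarrow> (nat \<times> nat) set \<Rightarrow> (nat \<Rightarrow> 'v set) \<Rightarrow> nat \<Rightarrow> 'v set" where
  "subtree_verts VT ET W v = \<Union>{W s | s. s \<in> VT \<and> (v, s) \<in> ET\<^sup>*}"

lemma dir_tree_decompD:
  assumes "is_dir_tree_decomp V E VT ET r X W"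
  shows "is_out_tree VT ET r"
    and "e \<in> ET \<Longrightarrow> X e \<subseteq> V"
    and "s \<in> VT \<Longrightarrow> W s \<subseteq> V"
    and "(\<Union>s\<in>VT. W s) = V"
    and "(u, v) \<in> ET \<Longrightarrow> is_normal V E (X (u, v)) (subtree_verts VT ET W v)"
proof -
  note conj = assms[unfolded is_dir_tree_decomp_def, folded subtree_verts_def]
  show "is_out_tree VT ET r" using conj by (elim conjE)
  show "e \<in> ET \<Longrightarrow> X e \<subseteq> V" using conj by (elim conjE) blast
  show "s \<in> VT \<Longrightarrow> W s \<subseteq> V" using conj by (elim conjE) blast
  show "(\<Union>s\<in>VT. W s) = V" using conj by (elim conjE)
  have "\<forall>(u, v)\<in>ET. is_normal V E (X (u, v)) (subtree_verts VT ET W v)" using conj by (elim conjE)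
  then show "(u, v) \<in> ET \<Longrightarrow> is_normal V E (X (u, v)) (subtree_verts VT ET W v)"
    by (metis (no_types, lifting) case_prodD)
qed

lemma tree_bag_subset:
  "is_dir_tree_decomp V E VT ET r X W \<Longrightarrow> s \<in> VT \<Longrightarrow> tree_bag ET X W s \<subseteq> V"
  using dir_tree_decompD(2,3) unfolding tree_bag_def by fastforce

lemma subtree_verts_root:
  assumes "is_dir_tree_decomp V E VT ET r X W"
  shows "subtree_verts VT ET W r = V"
proof -
  have "\<forall>v\<in>VT. (r, v) \<in> ET\<^sup>*"
    using dir_tree_decompD(1)[OF assms] unfolding is_out_tree_def by blast
  then have "{W s | s. s \<in> VT \<and> (r, s) \<in> ET\<^sup>*} = W ` VT" by auto
  then show ?thesis
    using dir_tree_decompD(4)[OF assms] unfolding subtree_verts_def by simp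
qed

lemma subtree_verts_subset_children:
  "subtree_verts VT ET W s \<subseteq> W s \<union> \<Union>{subtree_verts VT ET W c | c. (s, c) \<in> ET}"
proof
  fix x assume "x \<in> subtree_verts VT ET W s"
  then obtain s' where s': "s' \<in> VT" "(s, s') \<in> ET\<^sup>*" "x \<in> W s'"
    unfolding subtree_verts_def by blast
  from s'(2) show "x \<in> W s \<union> \<Union>{subtree_verts VT ET W c | c. (s, c) \<in> ET}"
  proof (cases rule: converse_rtranclE)
    case base
    then show ?thesis using s' by simp
  next
    case (step c)
    then have "x \<in> subtree_verts VT ET W c" using s' unfolding subtree_verts_def by blast
    then show ?thesis using step by blast
  qed
qed

lemma clique_bramble_descends:
  assumes D: "is_dir_tree_decomp V E VT ET r X W" and B: "clique_bramble V E B k"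
    and inside: "\<forall>b\<in>B. b \<inter> tree_bag ET X W s = {} \<longrightarrow> b \<subseteq> subtree_verts VT ET W s"
    and b0: "b0 \<in> B" "b0 \<inter> tree_bag ET X W s = {}"
  obtains c where "(s, c) \<in> ET"
    and "\<forall>b\<in>B. b \<inter> tree_bag ET X W c = {} \<longrightarrow> b \<subseteq> subtree_verts VT ET W c"
proof -
  note elems = clique_brambleD(1-3)[OF B] and touch = clique_brambleD(4)[OF B]
  obtain a where a: "a \<in> b0" using elems(1)[OF b0(1)] by blast
  have "a \<in> subtree_verts VT ET W s" "a \<notin> W s"
    using a inside b0 unfolding tree_bag_def by blast+
  then obtain c where c: "(s, c) \<in> ET" "a \<in> subtree_verts VT ET W c"
    using subtree_verts_subset_children[of VT ET W s] by blast
  let ?Z = "X (s, c)" and ?S = "subtree_verts VT ET W c"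
  have N: "is_normal V E ?Z ?S" using dir_tree_decompD(5)[OF D c(1)] .
  have sep_in_bags: "?Z \<subseteq> tree_bag ET X W s" "?Z \<subseteq> tree_bag ET X W c"
    using c(1) unfolding tree_bag_def by force+
  have "b0 \<subseteq> V - ?Z" using elems(2)[OF b0(1)] b0(2) sep_in_bags(1) by blast
  then have b0_in: "b0 \<subseteq> ?S"
    using bidirected_clique_inside_or_outside_normal[OF N elems(3)[OF b0(1)]] a c(2) by blast
  have "\<forall>b\<in>B. b \<inter> tree_bag ET X W c = {} \<longrightarrow> b \<subseteq> ?S"
  proof (intro ballI impI)
    fix b assume b: "b \<in> B" "b \<inter> tree_bag ET X W c = {}"
    have b_out: "b \<subseteq> V - ?Z" using elems(2)[OF b(1)] b(2) sep_in_bags(2) by blast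
    then have "b \<inter> ?S \<noteq> {}"
      using touching_crosses_normal[OF N touch[OF b0(1) b(1)] b0_in] \<open>b0 \<subseteq> V - ?Z\<close> by blast
    then show "b \<subseteq> ?S"
      using bidirected_clique_inside_or_outside_normal[OF N elems(3)[OF b(1)] b_out] by blast
  qed
  with c(1) show ?thesis by (rule that)
qed

lemma clique_bramble_large_bag:
  assumes D: "is_dir_tree_decomp V E VT ET r X W" and B: "clique_bramble V E B k"
  shows "\<exists>s\<in>VT. k \<le> card (tree_bag ET X W s)"
proof (rule ccontr)
  assume "\<not> ?thesis"
  then have small: "card (tree_bag ET X W s) < k" if "s \<in> VT" for s
    using that by (simp add: not_le)
  have T: "is_out_tree VT ET r" using dir_tree_decompD(1)[OF D] .
  \<comment> \<open>The root covers; if all bags are small, covering passes from a node to a child,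
    which cannot go on forever.\<close>
  define covers where "covers s \<longleftrightarrow> s \<in> VT \<and>
    (\<forall>b\<in>B. b \<inter> tree_bag ET X W s = {} \<longrightarrow> b \<subseteq> subtree_verts VT ET W s)" for s
  have "\<not> covers s" for s
    using wf_converse_out_tree[OF T]
  proof (induction s rule: wf_induct_rule)
    case (less s)
    show ?case
    proof
      assume cov: "covers s"
      then have s: "s \<in> VT"
        and inside: "\<forall>b\<in>B. b \<inter> tree_bag ET X W s = {} \<longrightarrow> b \<subseteq> subtree_verts VT ET W s"
        unfolding covers_def by blast+
      have "tree_bag ET X W s \<subseteq> V" "card (tree_bag ET X W s) < k"
        using tree_bag_subset[OF D s] small[OF s] .
      then obtain b0 where b0: "b0 \<in> B" "b0 \<inter> tree_bag ET X W s = {}"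
        using clique_brambleD(5)[OF B] by blast
      obtain c where c: "(s, c) \<in> ET"
        and inside_c: "\<forall>b\<in>B. b \<inter> tree_bag ET X W c = {} \<longrightarrow> b \<subseteq> subtree_verts VT ET W c"
        using clique_bramble_descends[OF D B inside b0] .
      have "c \<in> VT" using c T unfolding is_out_tree_def by blast
      then have "covers c" using inside_c unfolding covers_def by blast
      then show False using less c by blast
    qed
  qed
  moreover have "covers r"
    using T clique_brambleD(2)[OF B] subtree_verts_root[OF D] unfolding covers_def is_out_tree_def
    by blast
  ultimately show False by blast
qed

lemma tree_decomp_width_ge_clique_bramble:
  assumes D: "is_dir_tree_decomp V E VT ET r X W" and B: "clique_bramble V E B (k + 1)"
  shows "k \<le> tree_decomp_width VT ET X W"
proof -
  obtain s where "s \<in> VT" "k + 1 \<le> card (tree_bag ET X W s)"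
    using clique_bramble_large_bag[OF D B] by blast
  moreover have "finite VT" using dir_tree_decompD(1)[OF D] unfolding is_out_tree_def by blast
  ultimately have "k + 1 \<le> Max ((\<lambda>s. card (tree_bag ET X W s)) ` VT)"
    by (meson Max_ge finite_imageI image_eqI le_trans)
  then show ?thesis unfolding tree_decomp_width_tree_bag by simp
qed

lemma clique_bramble_le_dtw:
  assumes B: "clique_bramble V E B (k + 1)" and "finite V" and "V \<noteq> {}" and "E \<subseteq> V \<times> V"
  shows "k \<le> dtw V E"
  unfolding dtw_def
proof (rule cInf_greatest)
  obtain VT ET r X W where "is_dir_tree_decomp V E VT ET r X W"
    using dir_tree_decomp_of_path_decomp[OF dir_path_decomp_single_bag[OF assms(4)] assms(2,3)] .
  then show "{tree_decomp_width VT ET X W | VT ET r X W. is_dir_tree_decomp V E VT ET r X W} \<noteq> {}"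
    by blast
  show "k \<le> w" if "w \<in> {tree_decomp_width VT ET X W | VT ET r X W. is_dir_tree_decomp V E VT ET r X W}"
    for w
  proof -
    from that obtain VT ET r X W where "is_dir_tree_decomp V E VT ET r X W"
      and "w = tree_decomp_width VT ET X W" by blast
    then show ?thesis using tree_decomp_width_ge_clique_bramble[OF _ B] by simp
  qed
qed

lemma bidirected_clique_mono: "E \<subseteq> E' \<Longrightarrow> bidirected_clique E b \<Longrightarrow> bidirected_clique E' b"
  unfolding bidirected_clique_def bidirected_def by blast

lemma touching_mono: "E \<subseteq> E' \<Longrightarrow> touching E b b' \<Longrightarrow> touching E' b b'"
  unfolding touching_def bidirected_def by blast

lemma touching_commute: "touching E b b' \<longleftrightarrow> touching E b' b"
  unfolding touching_def bidirected_def by blast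
lemma clique_bramble_avoids:
  assumes "clique_bramble V E B k" and "card (Y \<inter> V) < k"
  shows "\<exists>b\<in>B. b \<inter> Y = {}"
proof -
  obtain b where "b \<in> B" "b \<inter> (Y \<inter> V) = {}"
    using clique_brambleD(5)[OF assms(1) _ assms(2)] by blast
  moreover have "b \<subseteq> V" using clique_brambleD(2)[OF assms(1) \<open>b \<in> B\<close>] .
  ultimately show ?thesis by blast
qed

lemma clique_bramble_mono:
  assumes B: "clique_bramble V E B k" and "V \<subseteq> V'" "E \<subseteq> E'" "finite V'" "k' \<le> k"
  shows "clique_bramble V' E' B k'"
proof (rule clique_brambleI)
  show "b \<noteq> {} \<and> b \<subseteq> V' \<and> bidirected_clique E' b" if "b \<in> B" for b
    using clique_brambleD(1-3)[OF B that] assms(2,3) bidirected_clique_mono by blast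
  show "touching E' b b'" if "b \<in> B" "b' \<in> B" for b b'
    using clique_brambleD(4)[OF B that] assms(3) by (rule touching_mono[rotated])
  show "\<exists>b\<in>B. b \<inter> Y = {}" if "Y \<subseteq> V'" "card Y < k'" for Y
  proof -
    have "card (Y \<inter> V) \<le> card Y"
      using that(1) \<open>finite V'\<close> by (meson card_mono finite_subset inf_le1)
    then show ?thesis using clique_bramble_avoids[OF B] that(2) assms(5) by simp
  qed
qed

lemma clique_bramble_singleton: "clique_bramble {v} E {{v}} 1"
proof (rule clique_brambleI)
  show "\<exists>b\<in>{{v}}. b \<inter> Y = {}" if "Y \<subseteq> {v}" "card Y < 1" for Y
    using that by (auto simp: subset_singleton_iff)
qed (auto simp: bidirected_clique_def touching_def)

lemma card_Int_less_of_superset: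
  assumes "Y \<subseteq> Va \<union> Vb" "Vb \<subseteq> Y" "Va \<inter> Vb = {}" "finite Y" "card Y < k + card Vb"
  shows "card (Y \<inter> Va) < k"
proof -
  have "finite (Y \<inter> Va)" "finite Vb" "(Y \<inter> Va) \<inter> Vb = {}"
    using assms(2-4) finite_subset by auto
  then have "card ((Y \<inter> Va) \<union> Vb) = card (Y \<inter> Va) + card Vb" by (rule card_Un_disjoint)
  moreover have "(Y \<inter> Va) \<union> Vb = Y" using assms(1,2) by blast
  ultimately have "card Y = card (Y \<inter> Va) + card Vb" by simp
  then show ?thesis using assms(5) by linarith
qed

definition cross_pairs :: "'v set \<Rightarrow> 'v set \<Rightarrow> 'v set set" where
  "cross_pairs Va Vb = {{u, v} | u v. u \<in> Va \<and> v \<in> Vb}"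

lemma mem_cross_pairs: "b \<in> cross_pairs Va Vb \<longleftrightarrow> (\<exists>u\<in>Va. \<exists>v\<in>Vb. b = {u, v})"
  unfolding cross_pairs_def by blast

lemma cross_pairs_meet:
  "b \<in> cross_pairs Va Vb \<Longrightarrow> (\<exists>x. x \<in> b \<inter> Va) \<and> (\<exists>y. y \<in> b \<inter> Vb)"
  unfolding mem_cross_pairs by blast

lemma series_bramble_touching:
  assumes A: "clique_bramble Va Ea BA ka" and B: "clique_bramble Vb Eb BB kb"
    and E: "Ea \<subseteq> E" "Eb \<subseteq> E" "Va \<times> Vb \<subseteq> E" "Vb \<times> Va \<subseteq> E"
    and b: "b \<in> BA \<union> BB \<union> cross_pairs Va Vb" and b': "b' \<in> BA \<union> BB \<union> cross_pairs Va Vb"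
  shows "touching E b b'"
proof -
  let ?P = "cross_pairs Va Vb"
  have cross: "touching E c c'" if "x \<in> c \<inter> Va" "y \<in> c' \<inter> Vb" for c c' x y
    using that E(3,4) unfolding touching_def bidirected_def by blast
  have meets_a: "\<exists>x. x \<in> c \<inter> Va" if "c \<in> BA \<union> ?P" for c
    using that clique_brambleD(1,2)[OF A] cross_pairs_meet by blast
  have meets_b: "\<exists>y. y \<in> c \<inter> Vb" if "c \<in> BB \<union> ?P" for c
    using that clique_brambleD(1,2)[OF B] cross_pairs_meet by blast
  consider "b \<in> BA" "b' \<in> BA" | "b \<in> BB" "b' \<in> BB"
    | "b \<in> BA \<union> ?P" "b' \<in> BB \<union> ?P" | "b \<in> BB \<union> ?P" "b' \<in> BA \<union> ?P"
    using b b' by blast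
  then show ?thesis
  proof cases
    case 1
    then show ?thesis using clique_brambleD(4)[OF A] E(1) touching_mono by blast
  next
    case 2
    then show ?thesis using clique_brambleD(4)[OF B] E(2) touching_mono by blast
  next
    case 3
    then show ?thesis using cross meets_a meets_b by meson
  next
    case 4
    then have "touching E b' b" using cross meets_a meets_b by meson
    then show ?thesis by (simp add: touching_commute)
  qed
qed

lemma series_bramble_avoids:
  assumes A: "clique_bramble Va Ea BA ka" and B: "clique_bramble Vb Eb BB kb"
    and disj: "Va \<inter> Vb = {}" and fin: "finite Va" "finite Vb"
    and Y: "Y \<subseteq> Va \<union> Vb" "card Y < min (ka + card Vb) (kb + card Va)"
  shows "\<exists>b\<in>BA \<union> BB \<union> cross_pairs Va Vb. b \<inter> Y = {}"
proof -
  have "finite Y" using Y(1) fin finite_subset by blast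
  consider u v where "u \<in> Va - Y" "v \<in> Vb - Y" | "Vb \<subseteq> Y" | "Va \<subseteq> Y" by blast
  then show ?thesis
  proof cases
    case (1 u v)
    then have "{u, v} \<in> cross_pairs Va Vb" "{u, v} \<inter> Y = {}" unfolding mem_cross_pairs by blast+
    then show ?thesis by blast
  next
    case 2
    then have "card (Y \<inter> Va) < ka"
      using Y disj \<open>finite Y\<close> by (intro card_Int_less_of_superset[of Y Va Vb]) auto
    then obtain b where "b \<in> BA" "b \<inter> Y = {}" using clique_bramble_avoids[OF A] by blast
    then show ?thesis by (intro bexI[of _ b]) simp_all
  next
    case 3
    then have "card (Y \<inter> Vb) < kb"
      using Y disj \<open>finite Y\<close> by (intro card_Int_less_of_superset[of Y Vb Va]) auto
    then obtain b where "b \<in> BB" "b \<inter> Y = {}" using clique_bramble_avoids[OF B] by blast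
    then show ?thesis by (intro bexI[of _ b]) simp_all
  qed
qed

lemma clique_bramble_series:
  assumes A: "clique_bramble Va Ea BA ka" and B: "clique_bramble Vb Eb BB kb"
    and disj: "Va \<inter> Vb = {}" and fin: "finite Va" "finite Vb"
    and E: "Ea \<subseteq> E" "Eb \<subseteq> E" "Va \<times> Vb \<subseteq> E" "Vb \<times> Va \<subseteq> E"
  shows "clique_bramble (Va \<union> Vb) E (BA \<union> BB \<union> cross_pairs Va Vb)
           (min (ka + card Vb) (kb + card Va))"
proof (rule clique_brambleI)
  show "b \<noteq> {} \<and> b \<subseteq> Va \<union> Vb \<and> bidirected_clique E b"
    if b: "b \<in> BA \<union> BB \<union> cross_pairs Va Vb" for b
  proof -
    consider "b \<in> BA" | "b \<in> BB" | "b \<in> cross_pairs Va Vb" using b by blast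
    then show ?thesis
    proof cases
      case 1
      then show ?thesis using clique_brambleD(1-3)[OF A] E(1) bidirected_clique_mono by blast
    next
      case 2
      then show ?thesis using clique_brambleD(1-3)[OF B] E(2) bidirected_clique_mono by blast
    next
      case 3
      then obtain u v where "b = {u, v}" "u \<in> Va" "v \<in> Vb" unfolding mem_cross_pairs by blast
      then show ?thesis using E(3,4) unfolding bidirected_clique_def bidirected_def by blast
    qed
  qed
  show "touching E b b'"
    if "b \<in> BA \<union> BB \<union> cross_pairs Va Vb" "b' \<in> BA \<union> BB \<union> cross_pairs Va Vb" for b b'
    using series_bramble_touching[OF A B E that] .
  show "\<exists>b\<in>BA \<union> BB \<union> cross_pairs Va Vb. b \<inter> Y = {}"
    if "Y \<subseteq> Va \<union> Vb" "card Y < min (ka + card Vb) (kb + card Va)" for Y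
    using series_bramble_avoids[OF A B disj fin that] .
qed

lemma clique_bramble_union:
  assumes "clique_bramble Va Ea Ba ka" and "clique_bramble Vb Eb Bb kb"
    and "Ea \<union> Eb \<subseteq> E" and "finite (Va \<union> Vb)"
  shows "\<exists>B. clique_bramble (Va \<union> Vb) E B (max ka kb)"
proof (cases "kb \<le> ka")
  case True
  then have "clique_bramble (Va \<union> Vb) E Ba (max ka kb)"
    using assms by (intro clique_bramble_mono[OF assms(1)]) auto
  then show ?thesis by blast
next
  case False
  then have "clique_bramble (Va \<union> Vb) E Bb (max ka kb)"
    using assms by (intro clique_bramble_mono[OF assms(2)]) auto
  then show ?thesis by blast
qed

lemma cotree_clique_bramble:
  "wf_dicotree t \<Longrightarrow> \<exists>B. clique_bramble (verts t) (arcs t) B (cotree_width t + 1)"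
proof (induction t)
  case (Leaf v)
  have "clique_bramble {v} {} {{v}} 1" by (rule clique_bramble_singleton)
  then show ?case by auto
next
  case (DUnion a b)
  then obtain Ba Bb where "clique_bramble (verts a) (arcs a) Ba (cotree_width a + 1)"
    and "clique_bramble (verts b) (arcs b) Bb (cotree_width b + 1)" by auto
  from clique_bramble_union[OF this] show ?case by simp
next
  case (DOrder a b)
  then obtain Ba Bb where "clique_bramble (verts a) (arcs a) Ba (cotree_width a + 1)"
    and "clique_bramble (verts b) (arcs b) Bb (cotree_width b + 1)" by auto
  from clique_bramble_union[OF this, of "arcs (DOrder a b)"] show ?case by simp
next
  case (DSeries a b)
  then have wf: "wf_dicotree a" "wf_dicotree b" "verts a \<inter> verts b = {}" by auto
  from DSeries obtain Ba Bb where "clique_bramble (verts a) (arcs a) Ba (cotree_width a + 1)"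
    and "clique_bramble (verts b) (arcs b) Bb (cotree_width b + 1)" by auto
  from clique_bramble_series[OF this wf(3), of "arcs (DSeries a b)"]
  obtain B where "clique_bramble (verts (DSeries a b)) (arcs (DSeries a b)) B
      (min (cotree_width a + 1 + card (verts b)) (cotree_width b + 1 + card (verts a)))"
    by auto
  moreover have "min (cotree_width a + 1 + card (verts b)) (cotree_width b + 1 + card (verts a))
      = cotree_width (DSeries a b) + 1"
    using card_verts[OF wf(1)] card_verts[OF wf(2)] by simp
  ultimately show ?case by auto
qed

section \<open>The widths of a directed co-graph\<close>

lemma cotree_widths:
  assumes "wf_dicotree t"
  shows "dpw (verts t) (arcs t) = cotree_width t" and "dtw (verts t) (arcs t) = cotree_width t"
proof -
  obtain B where "clique_bramble (verts t) (arcs t) B (cotree_width t + 1)"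
    using cotree_clique_bramble[OF assms] by blast
  then have "cotree_width t \<le> dtw (verts t) (arcs t)"
    using clique_bramble_le_dtw finite_verts verts_nonempty arcs_subset_verts by metis
  moreover have "dtw (verts t) (arcs t) \<le> dpw (verts t) (arcs t)"
    using dtw_le_dpw[OF finite_verts verts_nonempty arcs_subset_verts] .
  moreover have "dpw (verts t) (arcs t) \<le> cotree_width t" using dpw_le_cotree_width[OF assms] .
  ultimately show "dpw (verts t) (arcs t) = cotree_width t" "dtw (verts t) (arcs t) = cotree_width t"
    by simp_all
qed

definition width_prog :: tree_prog where
  "width_prog = TreeProg [0, 1]
     [AMax (AVar False 0) (AVar True 0), APlus (AVar False 1) (AVar True 1)]
     [AMin (APlus (AVar False 0) (AVar True 1)) (APlus (AVar True 0) (AVar False 1)),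
      APlus (AVar False 1) (AVar True 1)]
     [AMax (AVar False 0) (AVar True 0), APlus (AVar False 1) (AVar True 1)]"

lemma run_width_prog: "run width_prog t = [cotree_width t, length (leaves t)]"
  by (induction t) (simp_all add: width_prog_def get_def)

theorem theorem5p4:
  "\<exists>(P :: tree_prog) (i_dpw :: nat) (i_dtw :: nat).
     \<forall>t :: 'v dicotree. wf_dicotree t \<longrightarrow>
       get (run P t) i_dpw = dpw (verts t) (arcs t) \<and>
       get (run P t) i_dtw = dtw (verts t) (arcs t)"
proof (intro exI allI impI)
  fix t :: "'v dicotree"
  assume "wf_dicotree t"
  then show "get (run width_prog t) 0 = dpw (verts t) (arcs t)
      \<and> get (run width_prog t) 0 = dtw (verts t) (arcs t)"
    by (simp add: run_width_prog get_def cotree_widths)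
qed

end
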